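(* Let $G$ be a finite group and let $S=\bigoplus_{g\in G}S_g$ be an epsilon-strongly $G$-graded ring with principal component $R=S_e$. If $R$ is left (respectively right) noetherian, then $S$ is left (respectively right) noetherian.
   Context: All rings are associative with multiplicative identity $1\neq 0$. A ring $S$ is $G$-graded if $S=\bigoplus_{g\in G}S_g$ for additive subgroups $S_g$ with $S_gS_h\subseteq S_{gh}$ for all $g,h\in G$; $S_e$ is the principal component. $S$ is epsilon-strongly $G$-graded if (a) $S_gS_{g^{-1}}S_g=S_g$ for all $g\in G$, and (b) for each $g\in G$ the ideal $S_gS_{g^{-1}}$ of $S_e$ has a multiplicative identity. *)

theory Defs
  imports Main "HOL-Algebra.Group"
begin

definition add_subgroup :: "'a::ring_1 set \<Rightarrow> bool" where
  "add_subgroup A \<longleftrightarrow> 0 \<in> A \<and> (\<forall>x\<in>A. \<forall>y\<in>A. x + y \<in> A) \<and> (\<forall>x\<in>A. - x \<in> A)"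

definition ring_set_mult :: "'a::ring_1 set \<Rightarrow> 'a set \<Rightarrow> 'a set" where
  "ring_set_mult A B = {(\<Sum>i<n. a i * b i) | (n::nat) a b. \<forall>i<n. a i \<in> A \<and> b i \<in> B}"

definition graded_ring :: "('g, 'b) monoid_scheme \<Rightarrow> ('g \<Rightarrow> 'a::ring_1 set) \<Rightarrow> bool" where
  "graded_ring G S \<longleftrightarrow>
     (\<forall>g\<in>carrier G. add_subgroup (S g)) \<and>
     (\<forall>g\<in>carrier G. \<forall>h\<in>carrier G. \<forall>x\<in>S g. \<forall>y\<in>S h. x * y \<in> S (g \<otimes>\<^bsub>G\<^esub> h)) \<and>
     (\<forall>x::'a. \<exists>!f::'g \<Rightarrow> 'a. (\<forall>g. g \<notin> carrier G \<longrightarrow> f g = 0) \<and>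
                         finite {g. f g \<noteq> 0} \<and>
                         (\<forall>g\<in>carrier G. f g \<in> S g) \<and>
                         x = (\<Sum>g\<in>{g. f g \<noteq> 0}. f g))"

definition epsilon_strongly_graded :: "('g, 'b) monoid_scheme \<Rightarrow> ('g \<Rightarrow> 'a::ring_1 set) \<Rightarrow> bool" where
  "epsilon_strongly_graded G S \<longleftrightarrow> graded_ring G S \<and>
     (\<forall>g\<in>carrier G. ring_set_mult (ring_set_mult (S g) (S (inv\<^bsub>G\<^esub> g))) (S g) = S g) \<and>
     (\<forall>g\<in>carrier G. \<exists>\<epsilon>\<in>ring_set_mult (S g) (S (inv\<^bsub>G\<^esub> g)).
         \<forall>x\<in>ring_set_mult (S g) (S (inv\<^bsub>G\<^esub> g)). \<epsilon> * x = x \<and> x * \<epsilon> = x)"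

definition left_ideal_of :: "'a::ring_1 set \<Rightarrow> 'a set \<Rightarrow> bool" where
  "left_ideal_of R I \<longleftrightarrow> I \<subseteq> R \<and> add_subgroup I \<and> (\<forall>r\<in>R. \<forall>x\<in>I. r * x \<in> I)"

definition right_ideal_of :: "'a::ring_1 set \<Rightarrow> 'a set \<Rightarrow> bool" where
  "right_ideal_of R I \<longleftrightarrow> I \<subseteq> R \<and> add_subgroup I \<and> (\<forall>r\<in>R. \<forall>x\<in>I. x * r \<in> I)"

definition left_noetherian :: "'a::ring_1 set \<Rightarrow> bool" where
  "left_noetherian R \<longleftrightarrow> (\<forall>I::nat \<Rightarrow> 'a set. (\<forall>n. left_ideal_of R (I n)) \<longrightarrow>
      (\<forall>n. I n \<subseteq> I (Suc n)) \<longrightarrow> (\<exists>N. \<forall>n\<ge>N. I n = I N))"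

definition right_noetherian :: "'a::ring_1 set \<Rightarrow> bool" where
  "right_noetherian R \<longleftrightarrow> (\<forall>I::nat \<Rightarrow> 'a set. (\<forall>n. right_ideal_of R (I n)) \<longrightarrow>
      (\<forall>n. I n \<subseteq> I (Suc n)) \<longrightarrow> (\<exists>N. \<forall>n\<ge>N. I n = I N))"

end

theory Submission
  imports Defs
begin

text \<open>Every homogeneous component \<open>S g\<close> is spanned over \<open>S \<one>\<close> by finitely many of its
  elements: the local unit \<open>\<epsilon> = \<Sum> b\<^sub>i a\<^sub>i\<close> of \<open>S g\<inverse> S g\<close> is a right unit on
  \<open>S g = S g S g\<inverse> S g\<close>, so \<open>s = \<Sum> (s b\<^sub>i) a\<^sub>i\<close> with \<open>s b\<^sub>i \<in> S \<one>\<close>. As \<open>G\<close> is finite,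
  \<open>S\<close> is a finitely generated left \<open>S \<one>\<close>-module. A finitely generated module over a left
  noetherian ring is noetherian: for a fixed ordering of the generators, the ideals of leading
  coefficients of an ascending chain of submodules stabilise, and then so does the chain.
  Left ideals of \<open>S\<close> are in particular \<open>S \<one>\<close>-submodules. The right-handed statement is the
  same argument for the opposite multiplication.\<close>

lemma add_subgroup_zero: "add_subgroup A \<Longrightarrow> 0 \<in> A"
  unfolding add_subgroup_def by blast

lemma add_subgroup_add: "add_subgroup A \<Longrightarrow> x \<in> A \<Longrightarrow> y \<in> A \<Longrightarrow> x + y \<in> A"
  unfolding add_subgroup_def by blast

lemma add_subgroup_uminus: "add_subgroup A \<Longrightarrow> x \<in> A \<Longrightarrow> - x \<in> A"
  unfolding add_subgroup_def by blast

lemma add_subgroup_diff: "add_subgroup A \<Longrightarrow> x \<in> A \<Longrightarrow> y \<in> A \<Longrightarrow> x - y \<in> A"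
  unfolding add_subgroup_def diff_conv_add_uminus by blast

lemma graded_ring_sum_components:
  fixes G :: "('g, 'b) monoid_scheme" and S :: "'g \<Rightarrow> 'a::ring_1 set"
  assumes "graded_ring G S" and "finite (carrier G)"
  obtains f where "\<forall>g\<in>carrier G. f g \<in> S g" and "x = (\<Sum>g\<in>carrier G. f g)"
proof -
  have "\<exists>!f::'g \<Rightarrow> 'a. (\<forall>g. g \<notin> carrier G \<longrightarrow> f g = 0) \<and> finite {g. f g \<noteq> 0} \<and>
      (\<forall>g\<in>carrier G. f g \<in> S g) \<and> x = (\<Sum>g\<in>{g. f g \<noteq> 0}. f g)"
    using assms(1) unfolding graded_ring_def by blast
  then obtain f where f: "\<forall>g. g \<notin> carrier G \<longrightarrow> f g = 0" "\<forall>g\<in>carrier G. f g \<in> S g"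
      "x = (\<Sum>g\<in>{g. f g \<noteq> 0}. f g)"
    by blast
  have "(\<Sum>g\<in>{g. f g \<noteq> 0}. f g) = (\<Sum>g\<in>carrier G. f g)"
    using f(1) assms(2) by (intro sum.mono_neutral_left) auto
  then show ?thesis using f that by simp
qed

text \<open>Abstracting the product treats left modules over the ring (\<open>(*)\<close>) and over its opposite
  (\<open>\<lambda>x y. y * x\<close>) at once.\<close>
locale ring_product =
  fixes mul :: "'a::ring_1 \<Rightarrow> 'a \<Rightarrow> 'a"
  assumes mul_assoc: "mul (mul a b) c = mul a (mul b c)"
    and mul_add_left: "mul (a + b) c = mul a c + mul b c"
    and mul_add_right: "mul a (b + c) = mul a b + mul a c"
begin

lemma mul_zero_left [simp]: "mul 0 a = 0"
  using mul_add_left[of 0 0 a] by simp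

lemma mul_zero_right [simp]: "mul a 0 = 0"
  using mul_add_right[of a 0 0] by simp

lemma mul_minus_left: "mul (- a) b = - mul a b"
  using mul_add_left[of a "- a" b] minus_unique[of "mul a b" "mul (- a) b"] by simp

lemma mul_diff_left: "mul (a - b) c = mul a c - mul b c"
  using mul_add_left[of a "- b" c] by (simp add: mul_minus_left)

lemma mul_sum_right: "mul a (\<Sum>i\<in>A. f i) = (\<Sum>i\<in>A. mul a (f i))"
  by (induction A rule: infinite_finite_induct) (simp_all add: mul_add_right)

definition subring :: "'a set \<Rightarrow> bool" where
  "subring R \<longleftrightarrow> add_subgroup R \<and> (\<forall>x\<in>R. \<forall>y\<in>R. mul x y \<in> R)"

definition submodule :: "'a set \<Rightarrow> 'a set \<Rightarrow> bool" where
  "submodule R I \<longleftrightarrow> add_subgroup I \<and> (\<forall>r\<in>R. \<forall>x\<in>I. mul r x \<in> I)"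

definition noetherian_module :: "'a set \<Rightarrow> 'a set \<Rightarrow> bool" where
  "noetherian_module R M \<longleftrightarrow> (\<forall>I::nat \<Rightarrow> 'a set. (\<forall>n. I n \<subseteq> M \<and> submodule R (I n)) \<longrightarrow>
      (\<forall>n. I n \<subseteq> I (Suc n)) \<longrightarrow> (\<exists>N. \<forall>n\<ge>N. I n = I N))"

lemma noetherian_moduleD:
  assumes "noetherian_module R M" and "\<And>n. I n \<subseteq> M" and "\<And>n. submodule R (I n)"
    and "\<And>n. I n \<subseteq> I (Suc n)"
  shows "\<exists>N. \<forall>n\<ge>N. I n = I N"
proof -
  have "(\<forall>n. I n \<subseteq> M \<and> submodule R (I n)) \<longrightarrow> (\<forall>n. I n \<subseteq> I (Suc n)) \<longrightarrow> (\<exists>N. \<forall>n\<ge>N. I n = I N)"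
    using assms(1) unfolding noetherian_module_def by (rule spec)
  then show ?thesis using assms(2-4) by blast
qed

lemma noetherian_module_mono:
  assumes "R \<subseteq> R'" and noeth: "noetherian_module R M"
  shows "noetherian_module R' M"
  unfolding noetherian_module_def
proof (intro allI impI)
  fix I :: "nat \<Rightarrow> 'a set"
  assume I: "\<forall>n. I n \<subseteq> M \<and> submodule R' (I n)" and chain: "\<forall>n. I n \<subseteq> I (Suc n)"
  show "\<exists>N. \<forall>n\<ge>N. I n = I N"
  proof (rule noetherian_moduleD[OF noeth])
    show "I n \<subseteq> M" for n using I by blast
    show "submodule R (I n)" for n using I \<open>R \<subseteq> R'\<close> unfolding submodule_def by blast
    show "I n \<subseteq> I (Suc n)" for n using chain by blast
  qed
qed

definition leading_coeffs :: "'a set \<Rightarrow> (nat \<Rightarrow> 'a) \<Rightarrow> nat \<Rightarrow> 'a set \<Rightarrow> 'a set" where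
  "leading_coeffs R w j I =
     {r\<in>R. \<exists>c. (\<forall>i<j. c i \<in> R) \<and> mul r (w j) + (\<Sum>i<j. mul (c i) (w i)) \<in> I}"

lemma leading_coeffsI:
  "r \<in> R \<Longrightarrow> \<forall>i<j. c i \<in> R \<Longrightarrow> mul r (w j) + (\<Sum>i<j. mul (c i) (w i)) \<in> I \<Longrightarrow>
    r \<in> leading_coeffs R w j I"
  unfolding leading_coeffs_def by blast

lemma leading_coeffsE:
  assumes "r \<in> leading_coeffs R w j I"
  obtains c where "r \<in> R" "\<forall>i<j. c i \<in> R" "mul r (w j) + (\<Sum>i<j. mul (c i) (w i)) \<in> I"
  using assms unfolding leading_coeffs_def by blast

lemma leading_coeffs_mono: "I \<subseteq> J \<Longrightarrow> leading_coeffs R w j I \<subseteq> leading_coeffs R w j J"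
  unfolding leading_coeffs_def by blast

lemma leading_coeffs_submodule:
  assumes R: "subring R" and I: "submodule R I"
  shows "submodule R (leading_coeffs R w j I)"
proof -
  let ?L = "leading_coeffs R w j I"
  define comb where "comb r c = mul r (w j) + (\<Sum>i<j. mul (c i) (w i))" for r c
  have combI: "r \<in> ?L" if "r \<in> R" "\<forall>i<j. c i \<in> R" "comb r c \<in> I" for r c
    using that unfolding comb_def by (rule leading_coeffsI)
  have combE: "\<exists>c. (\<forall>i<j. c i \<in> R) \<and> comb r c \<in> I" if "r \<in> ?L" for r
    using that unfolding comb_def by (rule leading_coeffsE) blast
  have L_sub: "?L \<subseteq> R"
    unfolding leading_coeffs_def by blast
  have R_sub: "add_subgroup R" and R_mul: "\<And>x y. x \<in> R \<Longrightarrow> y \<in> R \<Longrightarrow> mul x y \<in> R"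
    using R unfolding subring_def by blast+
  have I_sub: "add_subgroup I" and I_mul: "\<And>r x. r \<in> R \<Longrightarrow> x \<in> I \<Longrightarrow> mul r x \<in> I"
    using I unfolding submodule_def by blast+
  have "0 \<in> ?L"
  proof (rule combI)
    show "comb 0 (\<lambda>_. 0) \<in> I" using add_subgroup_zero[OF I_sub] by (simp add: comb_def)
  qed (simp_all add: add_subgroup_zero[OF R_sub])
  moreover have "x + y \<in> ?L" if x: "x \<in> ?L" and y: "y \<in> ?L" for x y
  proof -
    obtain c d where c: "\<forall>i<j. c i \<in> R" "comb x c \<in> I" and d: "\<forall>i<j. d i \<in> R" "comb y d \<in> I"
      using combE[OF x] combE[OF y] by blast
    have eq: "comb (x + y) (\<lambda>i. c i + d i) = comb x c + comb y d"
      by (simp add: comb_def mul_add_left sum.distrib algebra_simps)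
    have "x + y \<in> R" using x y L_sub by (blast intro: add_subgroup_add[OF R_sub])
    moreover have "\<forall>i<j. c i + d i \<in> R" using c d by (auto intro: add_subgroup_add[OF R_sub])
    moreover have "comb (x + y) (\<lambda>i. c i + d i) \<in> I"
      unfolding eq by (rule add_subgroup_add[OF I_sub c(2) d(2)])
    ultimately show ?thesis by (rule combI)
  qed
  moreover have "- x \<in> ?L" if x: "x \<in> ?L" for x
  proof -
    obtain c where c: "\<forall>i<j. c i \<in> R" "comb x c \<in> I"
      using combE[OF x] by blast
    have eq: "comb (- x) (\<lambda>i. - c i) = - comb x c"
      by (simp add: comb_def mul_minus_left sum_negf)
    have "- x \<in> R" using x L_sub by (blast intro: add_subgroup_uminus[OF R_sub])
    moreover have "\<forall>i<j. - c i \<in> R" using c by (auto intro: add_subgroup_uminus[OF R_sub])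
    moreover have "comb (- x) (\<lambda>i. - c i) \<in> I"
      unfolding eq by (rule add_subgroup_uminus[OF I_sub c(2)])
    ultimately show ?thesis by (rule combI)
  qed
  moreover have "mul r x \<in> ?L" if r: "r \<in> R" and x: "x \<in> ?L" for r x
  proof -
    obtain c where c: "\<forall>i<j. c i \<in> R" "comb x c \<in> I"
      using combE[OF x] by blast
    have eq: "comb (mul r x) (\<lambda>i. mul r (c i)) = mul r (comb x c)"
      by (simp add: comb_def mul_add_right mul_sum_right mul_assoc)
    have "mul r x \<in> R" using r x L_sub by (blast intro: R_mul)
    moreover have "\<forall>i<j. mul r (c i) \<in> R" using c r by (auto intro: R_mul)
    moreover have "comb (mul r x) (\<lambda>i. mul r (c i)) \<in> I"
      unfolding eq by (rule I_mul[OF r c(2)])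
    ultimately show ?thesis by (rule combI)
  qed
  ultimately show ?thesis unfolding submodule_def add_subgroup_def by blast
qed

text \<open>Subtracting an element of \<open>A\<close> with the same leading coefficient shortens the combination.\<close>
lemma combination_mem_of_leading_coeffs_eq:
  assumes R: "add_subgroup R" and A: "add_subgroup A" and B: "add_subgroup B" and "A \<subseteq> B"
    and L: "\<forall>j<k. leading_coeffs R w j B \<subseteq> leading_coeffs R w j A"
  shows "j \<le> k \<Longrightarrow> x \<in> B \<Longrightarrow> \<forall>i<j. c i \<in> R \<Longrightarrow> x = (\<Sum>i<j. mul (c i) (w i)) \<Longrightarrow> x \<in> A"
proof (induction j arbitrary: x c)
  case 0
  then show ?case using add_subgroup_zero[OF A] by simp
next
  case (Suc j)
  have "mul (c j) (w j) + (\<Sum>i<j. mul (c i) (w i)) \<in> B"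
    using Suc.prems(2,4) by (simp add: add.commute)
  moreover have "c j \<in> R" "\<forall>i<j. c i \<in> R"
    using Suc.prems(3) by simp_all
  ultimately have "c j \<in> leading_coeffs R w j B"
    by (intro leading_coeffsI)
  with L Suc.prems(1) have "c j \<in> leading_coeffs R w j A"
    by (meson Suc_le_lessD subsetD)
  then obtain d where d: "\<forall>i<j. d i \<in> R" and y: "mul (c j) (w j) + (\<Sum>i<j. mul (d i) (w i)) \<in> A"
    (is "?y \<in> A") by (rule leading_coeffsE)
  have "j \<le> k" using Suc.prems(1) by simp
  moreover have "x - ?y \<in> B"
    using Suc.prems(2) y \<open>A \<subseteq> B\<close> by (blast intro: add_subgroup_diff[OF B])
  moreover have "\<forall>i<j. c i - d i \<in> R"
    using Suc.prems(3) d by (auto intro: add_subgroup_diff[OF R])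
  moreover have "x - ?y = (\<Sum>i<j. mul (c i - d i) (w i))"
    using Suc.prems(4) by (simp add: mul_diff_left sum_subtractf)
  ultimately have "x - ?y \<in> A" by (rule Suc.IH)
  then have "(x - ?y) + ?y \<in> A" using y by (rule add_subgroup_add[OF A])
  then show ?case by simp
qed

lemma noetherian_module_finitely_generated:
  fixes w :: "nat \<Rightarrow> 'a"
  assumes R: "subring R" and noeth: "noetherian_module R R"
    and gen: "\<forall>x. \<exists>c. (\<forall>i<k. c i \<in> R) \<and> x = (\<Sum>i<k. mul (c i) (w i))"
  shows "noetherian_module R UNIV"
  unfolding noetherian_module_def
proof (intro allI impI)
  fix I :: "nat \<Rightarrow> 'a set"
  assume I: "\<forall>n. I n \<subseteq> UNIV \<and> submodule R (I n)" and chain: "\<forall>n. I n \<subseteq> I (Suc n)"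
  have "\<forall>j. \<exists>N. \<forall>n\<ge>N. leading_coeffs R w j (I n) = leading_coeffs R w j (I N)"
  proof
    fix j
    show "\<exists>N. \<forall>n\<ge>N. leading_coeffs R w j (I n) = leading_coeffs R w j (I N)"
    proof (rule noetherian_moduleD[OF noeth])
      show "leading_coeffs R w j (I n) \<subseteq> R" for n
        unfolding leading_coeffs_def by blast
      show "submodule R (leading_coeffs R w j (I n))" for n
        using leading_coeffs_submodule[OF R] I by blast
      show "leading_coeffs R w j (I n) \<subseteq> leading_coeffs R w j (I (Suc n))" for n
        using chain leading_coeffs_mono by blast
    qed
  qed
  from choice[OF this] obtain N
    where N: "\<forall>j. \<forall>n\<ge>N j. leading_coeffs R w j (I n) = leading_coeffs R w j (I (N j))" ..
  define M where "M = (\<Sum>j<k. N j)"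
  have mono: "I a \<subseteq> I b" if "a \<le> b" for a b
    using lift_Suc_mono_le[of I, OF _ that] chain by blast
  have R_subgroup: "add_subgroup R" and I_subgroup: "\<And>m. add_subgroup (I m)"
    using R I unfolding subring_def submodule_def by blast+
  have "I n = I M" if "M \<le> n" for n
  proof
    have L: "\<forall>j<k. leading_coeffs R w j (I n) \<subseteq> leading_coeffs R w j (I M)"
    proof (intro allI impI)
      fix j assume "j < k"
      then have "N j \<le> M"
        unfolding M_def by (intro member_le_sum) auto
      then show "leading_coeffs R w j (I n) \<subseteq> leading_coeffs R w j (I M)"
        using N[rule_format, of j M] N[rule_format, of j n] \<open>M \<le> n\<close> by simp
    qed
    show "I n \<subseteq> I M"
    proof
      fix x assume "x \<in> I n"
      obtain c where "\<forall>i<k. c i \<in> R" "x = (\<Sum>i<k. mul (c i) (w i))"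
        using gen by blast
      then show "x \<in> I M"
        by (rule combination_mem_of_leading_coeffs_eq[OF R_subgroup I_subgroup I_subgroup
              mono[OF \<open>M \<le> n\<close>] L order.refl \<open>x \<in> I n\<close>])
    qed
    show "I M \<subseteq> I n" using mono[OF \<open>M \<le> n\<close>] .
  qed
  then show "\<exists>N. \<forall>n\<ge>N. I n = I N" by blast
qed

lemma graded_ring_finitely_generated:
  assumes "finite (carrier G)" and "graded_ring G S"
    and principal: "\<forall>g\<in>carrier G. \<forall>x\<in>S g. \<forall>y\<in>S (inv\<^bsub>G\<^esub> g). mul x y \<in> S \<one>\<^bsub>G\<^esub>"
    and span: "\<forall>g\<in>carrier G. \<exists>n a b. (\<forall>i<(n::nat). a i \<in> S g \<and> b i \<in> S (inv\<^bsub>G\<^esub> g)) \<and>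
                   (\<forall>s\<in>S g. s = (\<Sum>i<n. mul (mul s (b i)) (a i)))"
  shows "\<exists>(k::nat) w. \<forall>x. \<exists>c. (\<forall>i<k. c i \<in> S \<one>\<^bsub>G\<^esub>) \<and> x = (\<Sum>i<k. mul (c i) (w i))"
proof -
  from bchoice[OF span] obtain n where "\<forall>g\<in>carrier G. \<exists>a b. (\<forall>i<(n g::nat). a i \<in> S g \<and> b i \<in> S (inv\<^bsub>G\<^esub> g)) \<and>
                   (\<forall>s\<in>S g. s = (\<Sum>i<n g. mul (mul s (b i)) (a i)))" ..
  from bchoice[OF this] obtain a where "\<forall>g\<in>carrier G. \<exists>b. (\<forall>i<n g. a g i \<in> S g \<and> b i \<in> S (inv\<^bsub>G\<^esub> g)) \<and>
                   (\<forall>s\<in>S g. s = (\<Sum>i<n g. mul (mul s (b i)) (a g i)))" ..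
  from bchoice[OF this] obtain b where span: "\<forall>g\<in>carrier G. (\<forall>i<n g. a g i \<in> S g \<and> b g i \<in> S (inv\<^bsub>G\<^esub> g)) \<and>
                   (\<forall>s\<in>S g. s = (\<Sum>i<n g. mul (mul s (b g i)) (a g i)))" ..
  have span_mem: "\<And>g i. g \<in> carrier G \<Longrightarrow> i < n g \<Longrightarrow> a g i \<in> S g \<and> b g i \<in> S (inv\<^bsub>G\<^esub> g)"
    and span_eq: "\<And>g s. g \<in> carrier G \<Longrightarrow> s \<in> S g \<Longrightarrow> s = (\<Sum>i<n g. mul (mul s (b g i)) (a g i))"
    using span by blast+
  define T where "T = Sigma (carrier G) (\<lambda>g. {..<n g})"
  obtain h where h: "bij_betw h {..<card T} T"
    using ex_bij_betw_nat_finite[of T] \<open>finite (carrier G)\<close> by (auto simp: T_def lessThan_atLeast0)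
  define w where "w i = (case h i of (g, j) \<Rightarrow> a g j)" for i
  have "\<exists>c. (\<forall>i<card T. c i \<in> S \<one>\<^bsub>G\<^esub>) \<and> x = (\<Sum>i<card T. mul (c i) (w i))" for x
  proof -
    obtain f where f: "\<forall>g\<in>carrier G. f g \<in> S g" and x: "x = (\<Sum>g\<in>carrier G. f g)"
      using graded_ring_sum_components[OF \<open>graded_ring G S\<close> \<open>finite (carrier G)\<close>] by blast
    define c where "c t = (case t of (g, j) \<Rightarrow> mul (f g) (b g j))" for t
    have "f g = (\<Sum>j<n g. mul (mul (f g) (b g j)) (a g j))" if "g \<in> carrier G" for g
      using span_eq[OF that] f that by blast
    then have "x = (\<Sum>g\<in>carrier G. \<Sum>j<n g. mul (mul (f g) (b g j)) (a g j))"
      unfolding x by (rule sum.cong[OF refl])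
    also have "\<dots> = (\<Sum>(g, j)\<in>T. mul (mul (f g) (b g j)) (a g j))"
      unfolding T_def using \<open>finite (carrier G)\<close> by (intro sum.Sigma) auto
    also have "\<dots> = (\<Sum>t\<in>T. mul (c t) (case t of (g, j) \<Rightarrow> a g j))"
      unfolding c_def by (intro sum.cong) auto
    also have "\<dots> = (\<Sum>i<card T. mul (c (h i)) (w i))"
      unfolding w_def by (rule sum.reindex_bij_betw[OF h, symmetric])
    finally have "x = \<dots>" .
    moreover have "c t \<in> S \<one>\<^bsub>G\<^esub>" if t: "t \<in> T" for t
    proof -
      obtain g j where "t = (g, j)" "g \<in> carrier G" "j < n g"
        using t unfolding T_def by blast
      then show ?thesis using f span_mem principal unfolding c_def by simp
    qed
    ultimately show ?thesis
      using bij_betwE[OF h] by (intro exI[of _ "c \<circ> h"]) auto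
  qed
  then show ?thesis by blast
qed

lemma graded_ring_noetherian:
  assumes "group G" and "finite (carrier G)" and graded: "graded_ring G S"
    and principal: "\<forall>g\<in>carrier G. \<forall>x\<in>S g. \<forall>y\<in>S (inv\<^bsub>G\<^esub> g). mul x y \<in> S \<one>\<^bsub>G\<^esub>"
    and span: "\<forall>g\<in>carrier G. \<exists>n a b. (\<forall>i<(n::nat). a i \<in> S g \<and> b i \<in> S (inv\<^bsub>G\<^esub> g)) \<and>
                   (\<forall>s\<in>S g. s = (\<Sum>i<n. mul (mul s (b i)) (a i)))"
    and noeth: "noetherian_module (S \<one>\<^bsub>G\<^esub>) (S \<one>\<^bsub>G\<^esub>)"
  shows "noetherian_module UNIV UNIV"
proof -
  interpret group G by fact
  have "add_subgroup (S \<one>\<^bsub>G\<^esub>)"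
    using graded unfolding graded_ring_def by simp
  moreover have "\<forall>x\<in>S \<one>\<^bsub>G\<^esub>. \<forall>y\<in>S \<one>\<^bsub>G\<^esub>. mul x y \<in> S \<one>\<^bsub>G\<^esub>"
    using bspec[OF principal one_closed] by simp
  ultimately have "subring (S \<one>\<^bsub>G\<^esub>)"
    unfolding subring_def by blast
  moreover obtain k :: nat and w where "\<forall>x. \<exists>c. (\<forall>i<k. c i \<in> S \<one>\<^bsub>G\<^esub>) \<and> x = (\<Sum>i<k. mul (c i) (w i))"
    using graded_ring_finitely_generated[OF assms(2-5)] by blast
  ultimately have "noetherian_module (S \<one>\<^bsub>G\<^esub>) UNIV"
    using noeth by (intro noetherian_module_finitely_generated)
  then show ?thesis by (rule noetherian_module_mono[rotated]) simp
qed

end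

interpretation left: ring_product "(*)"
  by unfold_locales (simp_all add: algebra_simps)

interpretation right: ring_product "\<lambda>x y. y * x"
  by unfold_locales (simp_all add: algebra_simps)

lemma left_noetherian_iff: "left_noetherian R \<longleftrightarrow> left.noetherian_module R R"
proof -
  have "left_ideal_of R I \<longleftrightarrow> I \<subseteq> R \<and> left.submodule R I" for I
    unfolding left_ideal_of_def left.submodule_def by blast
  then show ?thesis unfolding left_noetherian_def left.noetherian_module_def by simp
qed

lemma right_noetherian_iff: "right_noetherian R \<longleftrightarrow> right.noetherian_module R R"
proof -
  have "right_ideal_of R I \<longleftrightarrow> I \<subseteq> R \<and> right.submodule R I" for I
    unfolding right_ideal_of_def right.submodule_def by blast
  then show ?thesis unfolding right_noetherian_def right.noetherian_module_def by simp
qed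

lemma graded_ring_mult_inv_mem:
  assumes "group G" and "graded_ring G S" and "g \<in> carrier G" and "x \<in> S g" and "y \<in> S (inv\<^bsub>G\<^esub> g)"
  shows "x * y \<in> S \<one>\<^bsub>G\<^esub>" and "y * x \<in> S \<one>\<^bsub>G\<^esub>"
proof -
  interpret group G by fact
  have "\<And>h k x y. h \<in> carrier G \<Longrightarrow> k \<in> carrier G \<Longrightarrow> x \<in> S h \<Longrightarrow> y \<in> S k \<Longrightarrow> x * y \<in> S (h \<otimes>\<^bsub>G\<^esub> k)"
    using assms(2) unfolding graded_ring_def by blast
  then show "x * y \<in> S \<one>\<^bsub>G\<^esub>" and "y * x \<in> S \<one>\<^bsub>G\<^esub>"
    using assms(3-5) by (metis inv_closed r_inv l_inv)+
qed

lemma ring_set_multE: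
  assumes "x \<in> ring_set_mult A B"
  obtains n a b where "\<forall>i<n. a i \<in> A \<and> b i \<in> B" and "x = (\<Sum>i<(n::nat). a i * b i)"
  using assms unfolding ring_set_mult_def by blast

lemma ring_set_mult_mem: "a \<in> A \<Longrightarrow> b \<in> B \<Longrightarrow> a * b \<in> ring_set_mult A B"
  unfolding ring_set_mult_def by (intro CollectI exI[of _ 1] exI[of _ "\<lambda>_. a"] exI[of _ "\<lambda>_. b"]) simp

lemma ring_set_mult_mult_left_eq:
  assumes "x \<in> ring_set_mult A B" and "\<And>a b. a \<in> A \<Longrightarrow> b \<in> B \<Longrightarrow> y * (a * b) = z * (a * b)"
  shows "y * x = z * x"
proof -
  obtain n a b where ab: "\<forall>i<n. a i \<in> A \<and> b i \<in> B" and x: "x = (\<Sum>i<(n::nat). a i * b i)"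
    using assms(1) by (rule ring_set_multE)
  show ?thesis
    unfolding x sum_distrib_left using ab assms(2) by (intro sum.cong) auto
qed

lemma ring_set_mult_mult_right_eq:
  assumes "x \<in> ring_set_mult A B" and "\<And>a b. a \<in> A \<Longrightarrow> b \<in> B \<Longrightarrow> a * b * y = a * b * z"
  shows "x * y = x * z"
proof -
  obtain n a b where ab: "\<forall>i<n. a i \<in> A \<and> b i \<in> B" and x: "x = (\<Sum>i<(n::nat). a i * b i)"
    using assms(1) by (rule ring_set_multE)
  show ?thesis
    unfolding x sum_distrib_right using ab assms(2) by (intro sum.cong) auto
qed

lemma epsilon_strongly_graded_right_span:
  assumes "epsilon_strongly_graded G S" and g: "g \<in> carrier G"
  shows "\<exists>n a b. (\<forall>i<(n::nat). a i \<in> S g \<and> b i \<in> S (inv\<^bsub>G\<^esub> g)) \<and>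
           (\<forall>s\<in>S g. s = (\<Sum>i<n. a i * (b i * s)))"
proof -
  let ?P = "ring_set_mult (S g) (S (inv\<^bsub>G\<^esub> g))"
  obtain \<epsilon> where "\<epsilon> \<in> ?P" and unit: "\<forall>p\<in>?P. \<epsilon> * p = p"
    using assms(1) g unfolding epsilon_strongly_graded_def by blast
  then obtain n a b where ab: "\<forall>i<n. a i \<in> S g \<and> b i \<in> S (inv\<^bsub>G\<^esub> g)"
    and \<epsilon>: "\<epsilon> = (\<Sum>i<(n::nat). a i * b i)"
    by (auto elim: ring_set_multE)
  have "s = (\<Sum>i<n. a i * (b i * s))" if "s \<in> S g" for s
  proof -
    have "s \<in> ring_set_mult ?P (S g)"
      using assms(1) g that unfolding epsilon_strongly_graded_def by blast
    then have "\<epsilon> * s = 1 * s"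
      by (rule ring_set_mult_mult_left_eq) (simp add: unit mult.assoc[symmetric])
    then show ?thesis unfolding \<epsilon> by (simp add: sum_distrib_right mult.assoc)
  qed
  then show ?thesis using ab by blast
qed

lemma epsilon_strongly_graded_left_span:
  assumes "group G" and "epsilon_strongly_graded G S" and g: "g \<in> carrier G"
  shows "\<exists>n a b. (\<forall>i<(n::nat). a i \<in> S g \<and> b i \<in> S (inv\<^bsub>G\<^esub> g)) \<and>
           (\<forall>s\<in>S g. s = (\<Sum>i<n. (s * b i) * a i))"
proof -
  interpret group G by fact
  let ?P = "ring_set_mult (S (inv\<^bsub>G\<^esub> g)) (S g)"
  have inv_g: "inv\<^bsub>G\<^esub> g \<in> carrier G" "inv\<^bsub>G\<^esub> (inv\<^bsub>G\<^esub> g) = g" using g by simp_all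
  obtain \<epsilon> where "\<epsilon> \<in> ?P" and unit: "\<forall>p\<in>?P. p * \<epsilon> = p"
    using assms(2) inv_g unfolding epsilon_strongly_graded_def by metis
  then obtain n a b where ab: "\<forall>i<n. b i \<in> S (inv\<^bsub>G\<^esub> g) \<and> a i \<in> S g"
    and \<epsilon>: "\<epsilon> = (\<Sum>i<(n::nat). b i * a i)"
    by (auto elim: ring_set_multE)
  have "s = (\<Sum>i<n. (s * b i) * a i)" if "s \<in> S g" for s
  proof -
    have "s \<in> ring_set_mult (ring_set_mult (S g) (S (inv\<^bsub>G\<^esub> g))) (S g)"
      using assms(2) g that unfolding epsilon_strongly_graded_def by blast
    then have "s * \<epsilon> = s * 1"
    proof (rule ring_set_mult_mult_right_eq)
      fix q c assume q: "q \<in> ring_set_mult (S g) (S (inv\<^bsub>G\<^esub> g))" and c: "c \<in> S g"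
      have "q * (c * \<epsilon>) = q * c"
        using q
      proof (rule ring_set_mult_mult_right_eq)
        fix a b assume "b \<in> S (inv\<^bsub>G\<^esub> g)"
        then have "(b * c) * \<epsilon> = b * c"
          using unit ring_set_mult_mem[OF _ c] by blast
        then show "a * b * (c * \<epsilon>) = a * b * c" by (simp add: mult.assoc)
      qed
      then show "q * c * \<epsilon> = q * c * 1" by (simp add: mult.assoc)
    qed
    then show ?thesis unfolding \<epsilon> by (simp add: sum_distrib_left mult.assoc)
  qed
  then show ?thesis using ab by blast
qed

theorem proposition3p4:
  fixes G :: "('g, 'b) monoid_scheme" and S :: "'g \<Rightarrow> 'a::ring_1 set"
  assumes "group G" and "finite (carrier G)"
    and "epsilon_strongly_graded G S"
  shows "(left_noetherian (S \<one>\<^bsub>G\<^esub>) \<longrightarrow> left_noetherian (UNIV :: 'a set)) \<and>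
         (right_noetherian (S \<one>\<^bsub>G\<^esub>) \<longrightarrow> right_noetherian (UNIV :: 'a set))"
proof -
  have graded: "graded_ring G S"
    using assms(3) unfolding epsilon_strongly_graded_def by blast
  have inv_mem: "\<forall>g\<in>carrier G. \<forall>x\<in>S g. \<forall>y\<in>S (inv\<^bsub>G\<^esub> g). x * y \<in> S \<one>\<^bsub>G\<^esub>"
    "\<forall>g\<in>carrier G. \<forall>x\<in>S g. \<forall>y\<in>S (inv\<^bsub>G\<^esub> g). y * x \<in> S \<one>\<^bsub>G\<^esub>"
    using graded_ring_mult_inv_mem[OF assms(1) graded] by blast+
  note left.graded_ring_noetherian[OF assms(1,2) graded inv_mem(1)
      ballI[OF epsilon_strongly_graded_left_span[OF assms(1,3)]]]
    right.graded_ring_noetherian[OF assms(1,2) graded inv_mem(2)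
      ballI[OF epsilon_strongly_graded_right_span[OF assms(3)]]]
  then show ?thesis
    unfolding left_noetherian_iff right_noetherian_iff by blast
qed

end
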